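(* Assume (A1), (A2), (A3). There are explicit constants $\mathcal C_1,\mathcal C_2,\mathcal C_r,\mathcal C_z>0$ such that for all $x,x',v,v'\in\mathbb R^d$, \[|x-x'|+|v-v'|\le\mathcal C_1\rho((x,v),(x',v')),\qquad |x-x'|^2+|v-v'|^2\le\mathcal C_2\rho((x,v),(x',v')),\] \[r(x,x',v,v')\le\mathcal C_r\rho((x,v),(x',v')),\qquad |x-x'|\le\mathcal C_zf(r(x,x',v,v'))\big(1+\epsilon\sqrt{H(x,v)}+\epsilon\sqrt{H(x',v')}\big).\]
   Context: $U,W\in\mathcal C^1(\mathbb R^d)$. (A1): $U\ge0$ and there exist $\lambda>0$, $A\ge0$ with $\tfrac12\nabla U(x)\cdot x\ge\lambda(U(x)+|x|^2/4)-A$ for all $x$. (A2): $\nabla U$ is $L_U$-Lipschitz, $L_U>0$. (A3): $W$ even, $\nabla W$ is $L_W$-Lipschitz, $L_W<\lambda/8$. Fix $\tilde A\ge0$ with $U(x)\ge\frac\lambda6|x|^2-\tilde A$ for all $x$. Set $\gamma=\frac{\lambda}{2(\lambda+1)}$, $B=24(A+(\lambda-\gamma)\tilde A+d)$, $H(x,v)=24U(x)+(6(1-\gamma)+\lambda)|x|^2+12x\cdot v+12|v|^2$, $\alpha=L_U+\frac\lambda4$, $R_1=\sqrt{\frac{24((1+\alpha)^2+\alpha^2)}{5\gamma\min(3,\lambda/3)}B}$, $r(x,\tilde x,v,\tilde v)=\alpha|x-\tilde x|+|x-\tilde x+v-\tilde v|$, $\kappa_0=\frac{L_U+L_W}\alpha+\alpha+96\max(\frac1{2\alpha},1)$,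 $c=\min\{\frac\gamma{36},\frac B3,\frac17\min(\frac12-\frac{L_U+L_W}{2\alpha},2\sqrt{\frac{L_U+L_W}{2\pi\alpha}})\exp(-\frac18\kappa_0R_1^2)\}$, $\epsilon=3c/B$, $\mathbf C=c+2\epsilon B$, $\phi(s)=\exp(-\frac18(\frac{L_U+L_W}\alpha+\alpha+96\epsilon\max(\frac1{2\alpha},1))s^2)$, $\Phi(s)=\int_0^s\phi$, $g(s)=1-\frac{\mathbf C}4\int_0^s\frac{\Phi(u)}{\phi(u)}du$, $f(s)=\int_0^{\min(s,R_1)}\phi(u)g(u)du$. Finally $\rho((x,v),(\tilde x,\tilde v))=f(r(x,\tilde x,v,\tilde v))\big(1+\epsilon H(x,v)+\epsilon H(\tilde x,\tilde v)\big)$. *)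

theory Defs
  imports "HOL-Analysis.Analysis"
begin

definition gam :: "real \<Rightarrow> real" where
  "gam lam = lam / (2 * (lam + 1))"

definition Bc :: "real \<Rightarrow> real \<Rightarrow> real \<Rightarrow> nat \<Rightarrow> real" where
  "Bc lam A At d = 24 * (A + (lam - gam lam) * At + real d)"

definition Hf :: "('a::real_inner \<Rightarrow> real) \<Rightarrow> real \<Rightarrow> 'a \<Rightarrow> 'a \<Rightarrow> real" where
  "Hf U lam x v = 24 * U x + (6 * (1 - gam lam) + lam) * (norm x)\<^sup>2 + 12 * (x \<bullet> v) + 12 * (norm v)\<^sup>2"

definition alph :: "real \<Rightarrow> real \<Rightarrow> real" where
  "alph lam LU = LU + lam / 4"

definition R1 :: "real \<Rightarrow> real \<Rightarrow> real \<Rightarrow> real \<Rightarrow> nat \<Rightarrow> real" where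
  "R1 lam A At LU d =
     sqrt (24 * ((1 + alph lam LU)\<^sup>2 + (alph lam LU)\<^sup>2) / (5 * gam lam * min 3 (lam / 3)) * Bc lam A At d)"

definition rdist :: "real \<Rightarrow> 'a::real_normed_vector \<Rightarrow> 'a \<Rightarrow> 'a \<Rightarrow> 'a \<Rightarrow> real" where
  "rdist al x x' v v' = al * norm (x - x') + norm (x - x' + v - v')"

definition kappa0 :: "real \<Rightarrow> real \<Rightarrow> real \<Rightarrow> real" where
  "kappa0 lam LU LW = (LU + LW) / alph lam LU + alph lam LU + 96 * max (1 / (2 * alph lam LU)) 1"

definition cc :: "real \<Rightarrow> real \<Rightarrow> real \<Rightarrow> real \<Rightarrow> real \<Rightarrow> nat \<Rightarrow> real" where
  "cc lam A At LU LW d =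
     min (gam lam / 36) (min (Bc lam A At d / 3)
       ((1/7) * min (1/2 - (LU + LW) / (2 * alph lam LU))
                    (2 * sqrt ((LU + LW) / (2 * pi * alph lam LU)))
          * exp (- (1/8) * kappa0 lam LU LW * (R1 lam A At LU d)\<^sup>2)))"

definition epsc :: "real \<Rightarrow> real \<Rightarrow> real \<Rightarrow> real \<Rightarrow> real \<Rightarrow> nat \<Rightarrow> real" where
  "epsc lam A At LU LW d = 3 * cc lam A At LU LW d / Bc lam A At d"

definition Cbig :: "real \<Rightarrow> real \<Rightarrow> real \<Rightarrow> real \<Rightarrow> real \<Rightarrow> nat \<Rightarrow> real" where
  "Cbig lam A At LU LW d = cc lam A At LU LW d + 2 * epsc lam A At LU LW d * Bc lam A At d"

definition phif :: "real \<Rightarrow> real \<Rightarrow> real \<Rightarrow> real \<Rightarrow> real \<Rightarrow> nat \<Rightarrow> real \<Rightarrow> real" where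
  "phif lam A At LU LW d s =
     exp (- (1/8) * ((LU + LW) / alph lam LU + alph lam LU
            + 96 * epsc lam A At LU LW d * max (1 / (2 * alph lam LU)) 1) * s\<^sup>2)"

definition Phif :: "real \<Rightarrow> real \<Rightarrow> real \<Rightarrow> real \<Rightarrow> real \<Rightarrow> nat \<Rightarrow> real \<Rightarrow> real" where
  "Phif lam A At LU LW d s = integral {0..s} (phif lam A At LU LW d)"

definition gf :: "real \<Rightarrow> real \<Rightarrow> real \<Rightarrow> real \<Rightarrow> real \<Rightarrow> nat \<Rightarrow> real \<Rightarrow> real" where
  "gf lam A At LU LW d s = 1 - Cbig lam A At LU LW d / 4 *
     integral {0..s} (\<lambda>u. Phif lam A At LU LW d u / phif lam A At LU LW d u)"

definition ff :: "real \<Rightarrow> real \<Rightarrow> real \<Rightarrow> real \<Rightarrow> real \<Rightarrow> nat \<Rightarrow> real \<Rightarrow> real" where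
  "ff lam A At LU LW d s = integral {0..min s (R1 lam A At LU d)}
     (\<lambda>u. phif lam A At LU LW d u * gf lam A At LU LW d u)"

definition rho :: "('a::euclidean_space \<Rightarrow> real) \<Rightarrow> real \<Rightarrow> real \<Rightarrow> real \<Rightarrow> real \<Rightarrow> real
    \<Rightarrow> ('a \<times> 'a) \<Rightarrow> ('a \<times> 'a) \<Rightarrow> real" where
  "rho U lam A At LU LW z z' =
     (let d = DIM('a); e = epsc lam A At LU LW d in
      ff lam A At LU LW d (rdist (alph lam LU) (fst z) (fst z') (snd z) (snd z'))
      * (1 + e * Hf U lam (fst z) (snd z) + e * Hf U lam (fst z') (snd z')))"

end

theory Submission
  imports Defs
begin

(* Since c is tiny compared with exp (-kappa0 R1^2/8), g stays
   above 1/2 on [0, R1], so f s >= a * min s R1 with a = exp (-K R1^2/8) / 2.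
   Each quantity on the left is then compared with rho = f r * (1 + eps H + eps H') in two
   regimes: for r <= R1 it is at most linear in r (r is equivalent to |x - x'| + |v - v'|) and
   r <= f r / a <= rho / a; for r > R1 we have f r >= a R1, and the distances are bounded by the
   energies, because |x| + |v| <= P sqrt (H x v) <= P (1 + H x v). *)

lemma gaussian_primitive_div_le:
  fixes K R u :: real
  defines "\<phi> \<equiv> \<lambda>s. exp (- (1/8) * K * s\<^sup>2)"
  assumes K: "K \<ge> 0" and u: "0 \<le> u" "u \<le> R"
  shows "integral {0..u} \<phi> / \<phi> u \<le> R * exp ((1/8) * K * R\<^sup>2)"
proof -
  have \<phi>_int: "\<phi> integrable_on {0..u}"
    unfolding \<phi>_def by (intro integrable_continuous_interval continuous_intros)
  have "integral {0..u} \<phi> \<le> integral {0..u} (\<lambda>_. 1::real)"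
    by (rule integral_le[OF \<phi>_int]) (use K in \<open>auto simp: \<phi>_def\<close>)
  with u have primitive_le: "integral {0..u} \<phi> \<le> R" by simp
  have primitive_nonneg: "0 \<le> integral {0..u} \<phi>"
    by (rule integral_nonneg[OF \<phi>_int]) (simp add: \<phi>_def)
  have "1 / \<phi> u = exp ((1/8) * K * u\<^sup>2)"
    by (simp add: \<phi>_def exp_minus field_simps)
  also have "\<dots> \<le> exp ((1/8) * K * R\<^sup>2)"
    using u K by (simp add: mult_left_mono power_mono)
  finally have inverse_le: "1 / \<phi> u \<le> exp ((1/8) * K * R\<^sup>2)" .
  have "0 < \<phi> u" by (simp add: \<phi>_def)
  then have "integral {0..u} \<phi> * (1 / \<phi> u) \<le> R * exp ((1/8) * K * R\<^sup>2)"
    using primitive_le primitive_nonneg inverse_le by (intro mult_mono) auto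
  then show ?thesis by simp
qed

lemma gaussian_profile_ge_linear:
  fixes K R C s :: real
  defines "\<phi> \<equiv> \<lambda>s. exp (- (1/8) * K * s\<^sup>2)"
  assumes K: "K \<ge> 0" and R: "R > 0" and C: "C \<ge> 0" and s: "s \<ge> 0"
    and small: "C / 4 * R\<^sup>2 * exp ((1/8) * K * R\<^sup>2) \<le> 1/2"
  shows "exp (- (1/8) * K * R\<^sup>2) / 2 * min s R
    \<le> integral {0..min s R}
         (\<lambda>u. \<phi> u * (1 - C / 4 * integral {0..u} (\<lambda>w. integral {0..w} \<phi> / \<phi> w)))"
proof -
  define h where "h = (\<lambda>w. integral {0..w} \<phi> / \<phi> w)"
  define g where "g = (\<lambda>u. 1 - C / 4 * integral {0..u} h)"
  have \<phi>_cont: "continuous_on S \<phi>" for S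
    unfolding \<phi>_def by (intro continuous_intros)
  have h_cont: "continuous_on {0..R} h"
    unfolding h_def \<phi>_def
    by (intro continuous_intros indefinite_integral_continuous_1
        integrable_continuous_interval \<phi>_cont[unfolded \<phi>_def]) simp
  then have h_int: "h integrable_on {0..u}" if "u \<le> R" for u
    using that by (intro integrable_continuous_interval continuous_on_subset[OF h_cont]) auto
  have h_le: "h w \<le> R * exp ((1/8) * K * R\<^sup>2)" if "0 \<le> w" "w \<le> R" for w
    unfolding h_def \<phi>_def by (rule gaussian_primitive_div_le[OF K that])
  have g_ge: "1/2 \<le> g u" if u: "0 \<le> u" "u \<le> R" for u
  proof -
    have "integral {0..u} h \<le> integral {0..u} (\<lambda>_. R * exp ((1/8) * K * R\<^sup>2))"
      using u by (intro integral_le h_int) (use h_le in auto)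
    also have "\<dots> = u * (R * exp ((1/8) * K * R\<^sup>2))"
      using u by simp
    also have "\<dots> \<le> R\<^sup>2 * exp ((1/8) * K * R\<^sup>2)"
      using u R by (simp add: power2_eq_square mult_right_mono)
    finally have "C / 4 * integral {0..u} h \<le> C / 4 * (R\<^sup>2 * exp ((1/8) * K * R\<^sup>2))"
      using C by (intro mult_left_mono) auto
    with small show ?thesis
      unfolding g_def mult.assoc by linarith
  qed
  define t where "t = min s R"
  have t: "0 \<le> t" "t \<le> R" using s R by (auto simp: t_def)
  have g_cont: "continuous_on {0..t} g"
    unfolding g_def using t
    by (intro continuous_intros continuous_on_subset[OF indefinite_integral_continuous_1[OF h_int]])
      auto
  have "integral {0..t} (\<lambda>_. exp (- (1/8) * K * R\<^sup>2) / 2) \<le> integral {0..t} (\<lambda>u. \<phi> u * g u)"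
  proof (intro integral_le integrable_continuous_interval continuous_intros \<phi>_cont g_cont)
    fix u assume u: "u \<in> {0..t}"
    have "exp (- (1/8) * K * R\<^sup>2) \<le> \<phi> u"
      unfolding \<phi>_def using u t K by (simp add: mult_left_mono power_mono)
    moreover have "1/2 \<le> g u" using g_ge u t by simp
    ultimately have "exp (- (1/8) * K * R\<^sup>2) * (1/2) \<le> \<phi> u * g u"
      by (intro mult_mono) (auto simp: \<phi>_def)
    then show "exp (- (1/8) * K * R\<^sup>2) / 2 \<le> \<phi> u * g u" by simp
  qed
  with t show ?thesis by (simp add: t_def g_def h_def mult.commute)
qed

lemma le_profile_times_weight:
  fixes E F W a R r k1 k2 :: real
  assumes a: "a > 0" and R: "R > 0" and r: "r \<ge> 0" and W: "W \<ge> 1"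
    and k: "k1 \<ge> 0" "k2 \<ge> 0"
    and profile: "a * min r R \<le> F"
    and near: "r \<le> R \<Longrightarrow> E \<le> k1 * r"
    and far: "R < r \<Longrightarrow> E \<le> k2 * W"
  shows "E \<le> (k1 / a + k2 / (a * R)) * (F * W)"
proof -
  have "0 \<le> a * min r R" using a r R by simp
  with profile have F: "0 \<le> F" by linarith
  have FW: "0 \<le> F * W" using F W by simp
  show ?thesis
  proof (cases "r \<le> R")
    case True
    with profile have "a * r \<le> F" by simp
    with a have "r \<le> F / a" by (simp add: pos_le_divide_eq mult.commute)
    with near[OF True] k have "E \<le> k1 / a * F"
      by (metis mult_left_mono order_trans times_divide_eq_left times_divide_eq_right)
    also have "\<dots> \<le> k1 / a * (F * W)"
      using F W a k by (intro mult_left_mono) (simp_all add: mult_le_cancel_left1)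
    also have "\<dots> \<le> (k1 / a + k2 / (a * R)) * (F * W)"
      using FW a R k by (simp add: distrib_right)
    finally show ?thesis .
  next
    case False
    with profile have "a * R \<le> F" by simp
    with W a R have "W \<le> F * W / (a * R)"
      by (simp add: pos_le_divide_eq mult_right_mono)
    with far False k have "E \<le> k2 / (a * R) * (F * W)"
      by (metis mult_left_mono not_le order_trans times_divide_eq_left times_divide_eq_right)
    also have "\<dots> \<le> (k1 / a + k2 / (a * R)) * (F * W)"
      using FW a k by (simp add: distrib_right)
    finally show ?thesis .
  qed
qed

lemma rdist_nonneg: "\<alpha> \<ge> 0 \<Longrightarrow> 0 \<le> rdist \<alpha> x x' v v'"
  by (simp add: rdist_def)

lemma norm_diff_le_rdist:
  assumes "\<alpha> > 0"
  shows "norm (x - x') \<le> rdist \<alpha> x x' v v' / \<alpha>"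
  using assms by (simp add: rdist_def field_simps)

lemma norm_diff_add_le_rdist:
  fixes x x' v v' :: "'a::real_normed_vector"
  assumes "\<alpha> > 0"
  shows "norm (x - x') + norm (v - v') \<le> (1 + 2 / \<alpha>) * rdist \<alpha> x x' v v'"
proof -
  have "norm (v - v') \<le> norm (x - x' + v - v') + norm (x - x')"
    using norm_triangle_ineq4[of "x - x' + v - v'" "x - x'"] by (simp add: algebra_simps)
  then have "norm (x - x') + norm (v - v') \<le> 2 * norm (x - x') + norm (x - x' + v - v')"
    by simp
  also have "\<dots> \<le> (1 + 2 / \<alpha>) * rdist \<alpha> x x' v v'"
    using assms by (simp add: rdist_def field_simps)
  finally show ?thesis .
qed

lemma rdist_le_norm_diff_add:
  fixes x x' v v' :: "'a::real_normed_vector"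
  assumes "\<alpha> \<ge> 0"
  shows "rdist \<alpha> x x' v v' \<le> (\<alpha> + 1) * (norm (x - x') + norm (v - v'))"
proof -
  have "norm (x - x' + v - v') \<le> norm (x - x') + norm (v - v')"
    using norm_triangle_ineq[of "x - x'" "v - v'"] by (simp add: algebra_simps)
  moreover have "0 \<le> \<alpha> * norm (v - v')" using assms by simp
  ultimately show ?thesis
    by (simp add: rdist_def algebra_simps)
qed

lemma sqrt_le_one_plus: "0 \<le> (H::real) \<Longrightarrow> sqrt H \<le> 1 + H"
  by (intro real_le_lsqrt) (auto simp: power2_eq_square algebra_simps)

lemma sqrt_energy_sum_le_weight:
  fixes H H' P \<epsilon> :: real
  assumes "0 < \<epsilon>" "\<epsilon> \<le> 1" "0 \<le> P" "0 \<le> H" "0 \<le> H'"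
  shows "P * sqrt H + P * sqrt H' \<le> 2 * P / \<epsilon> * (1 + \<epsilon> * H + \<epsilon> * H')"
proof -
  have "P * sqrt H + P * sqrt H' \<le> P * (2 + H + H')"
    using sqrt_le_one_plus[of H] sqrt_le_one_plus[of H'] assms
    by (simp add: distrib_left[symmetric] mult_left_mono)
  also have "\<dots> \<le> 2 * P / \<epsilon> * (1 + \<epsilon> * H + \<epsilon> * H')"
  proof -
    have "2 \<le> 2 / \<epsilon>" using assms by (simp add: field_simps)
    with assms have "P * (2 + H + H') \<le> P * (2 / \<epsilon> + 2 * H + 2 * H')"
      by (intro mult_left_mono) auto
    also have "\<dots> = 2 * P / \<epsilon> * (1 + \<epsilon> * H + \<epsilon> * H')"
      using assms by (simp add: field_simps)
    finally show ?thesis .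
  qed
  finally show ?thesis .
qed

lemma distances_le_weighted_profile:
  fixes x x' v v' :: "'a::real_normed_vector"
  assumes \<alpha>: "\<alpha> > 0" and a: "a > 0" and R: "R > 0" and \<epsilon>: "0 < \<epsilon>" "\<epsilon> \<le> 1" and P: "P \<ge> 0"
    and H: "H \<ge> 0" "H' \<ge> 0"
    and energy: "norm x + norm v \<le> P * sqrt H" "norm x' + norm v' \<le> P * sqrt H'"
    and profile: "a * min (rdist \<alpha> x x' v v') R \<le> F"
  defines "W \<equiv> 1 + \<epsilon> * H + \<epsilon> * H'"
  shows "norm (x - x') + norm (v - v') \<le> ((1 + 2 / \<alpha>) / a + (2 * P / \<epsilon>) / (a * R)) * (F * W)"
    and "(norm (x - x'))\<^sup>2 + (norm (v - v'))\<^sup>2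
           \<le> ((1 + 2 / \<alpha>)\<^sup>2 * R / a + (2 * P\<^sup>2 / \<epsilon>) / (a * R)) * (F * W)"
    and "rdist \<alpha> x x' v v' \<le> (1 / a + (\<alpha> + 1) * (2 * P / \<epsilon>) / (a * R)) * (F * W)"
    and "norm (x - x') \<le> ((1 / \<alpha>) / a + (P / \<epsilon>) / (a * R)) * (F * (1 + \<epsilon> * sqrt H + \<epsilon> * sqrt H'))"
proof -
  define r where "r = rdist \<alpha> x x' v v'"
  define D where "D = norm (x - x') + norm (v - v')"
  have r: "0 \<le> r" using \<alpha> by (simp add: r_def rdist_nonneg)
  have W: "1 \<le> W" using \<epsilon> H by (simp add: W_def)
  have D_le_r: "D \<le> (1 + 2 / \<alpha>) * r"
    unfolding D_def r_def using \<alpha> by (rule norm_diff_add_le_rdist)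
  have D_le_energy: "D \<le> P * sqrt H + P * sqrt H'"
    using norm_triangle_ineq4[of x x'] norm_triangle_ineq4[of v v'] energy by (simp add: D_def)
  then have D_le_W: "D \<le> 2 * P / \<epsilon> * W"
    unfolding W_def using sqrt_energy_sum_le_weight[OF \<epsilon> P H] by linarith
  note bound = le_profile_times_weight[OF a R r _ _ _ profile[folded r_def]]
  show "norm (x - x') + norm (v - v') \<le> ((1 + 2 / \<alpha>) / a + (2 * P / \<epsilon>) / (a * R)) * (F * W)"
    by (rule bound[OF W]) (use D_le_r D_le_W \<alpha> \<epsilon> P in \<open>auto simp: D_def\<close>)
  have D: "0 \<le> D" by (simp add: D_def)
  have sum_squares_le: "(norm (x - x'))\<^sup>2 + (norm (v - v'))\<^sup>2 \<le> D\<^sup>2"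
    by (simp add: D_def power2_eq_square algebra_simps)
  show "(norm (x - x'))\<^sup>2 + (norm (v - v'))\<^sup>2
           \<le> ((1 + 2 / \<alpha>)\<^sup>2 * R / a + (2 * P\<^sup>2 / \<epsilon>) / (a * R)) * (F * W)"
  proof (rule bound[OF W])
    assume "r \<le> R"
    have "D\<^sup>2 \<le> ((1 + 2 / \<alpha>) * r)\<^sup>2"
      using D_le_r D by (intro power_mono) simp_all
    also have "\<dots> = (1 + 2 / \<alpha>)\<^sup>2 * r * r" by (simp add: power2_eq_square)
    also have "\<dots> \<le> (1 + 2 / \<alpha>)\<^sup>2 * R * r"
      using \<open>r \<le> R\<close> r by (intro mult_right_mono mult_left_mono) simp_all
    finally show "(norm (x - x'))\<^sup>2 + (norm (v - v'))\<^sup>2 \<le> (1 + 2 / \<alpha>)\<^sup>2 * R * r"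
      using sum_squares_le by linarith
  next
    have "D\<^sup>2 \<le> (P * sqrt H + P * sqrt H')\<^sup>2"
      using D_le_energy D by (intro power_mono) simp_all
    also have "\<dots> \<le> 2 * P\<^sup>2 * (H + H')"
      using zero_le_power2[of "P * sqrt H - P * sqrt H'"] H
      by (simp add: power2_eq_square algebra_simps)
    also have "\<dots> \<le> 2 * P\<^sup>2 / \<epsilon> * W"
      using \<epsilon> H by (simp add: W_def field_simps)
    finally show "(norm (x - x'))\<^sup>2 + (norm (v - v'))\<^sup>2 \<le> 2 * P\<^sup>2 / \<epsilon> * W"
      using sum_squares_le by linarith
  qed (use \<alpha> \<epsilon> R in auto)
  show "rdist \<alpha> x x' v v' \<le> (1 / a + (\<alpha> + 1) * (2 * P / \<epsilon>) / (a * R)) * (F * W)"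
  proof (rule bound[OF W, of 1 "(\<alpha> + 1) * (2 * P / \<epsilon>)"])
    have "r \<le> (\<alpha> + 1) * D"
      unfolding r_def D_def using \<alpha> by (intro rdist_le_norm_diff_add) simp
    also have "\<dots> \<le> (\<alpha> + 1) * (2 * P / \<epsilon> * W)"
      using D_le_W \<alpha> by (intro mult_left_mono) auto
    finally show "rdist \<alpha> x x' v v' \<le> (\<alpha> + 1) * (2 * P / \<epsilon>) * W" by (simp add: r_def)
  qed (use \<alpha> \<epsilon> P in \<open>auto simp: r_def\<close>)
  show "norm (x - x') \<le> ((1 / \<alpha>) / a + (P / \<epsilon>) / (a * R)) * (F * (1 + \<epsilon> * sqrt H + \<epsilon> * sqrt H'))"
  proof (rule le_profile_times_weight[OF a R r _ _ _ profile[folded r_def]])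
    show "norm (x - x') \<le> 1 / \<alpha> * r" using norm_diff_le_rdist[OF \<alpha>] by (simp add: r_def)
    have "norm (x - x') \<le> P * sqrt H + P * sqrt H'"
      using D_le_energy norm_ge_zero[of "v - v'"] unfolding D_def by linarith
    also have "\<dots> \<le> P / \<epsilon> * (1 + \<epsilon> * sqrt H + \<epsilon> * sqrt H')"
      using \<epsilon> P by (simp add: field_simps)
    finally show "norm (x - x') \<le> P / \<epsilon> * (1 + \<epsilon> * sqrt H + \<epsilon> * sqrt H')" .
  qed (use \<alpha> \<epsilon> P H in auto)
qed

lemma distance_bounds_by_weighted_profile:
  fixes H :: "'a::real_normed_vector \<Rightarrow> 'a \<Rightarrow> real" and f :: "real \<Rightarrow> real"
  assumes \<alpha>: "\<alpha> > 0" and a: "a > 0" and R: "R > 0" and \<epsilon>: "0 < \<epsilon>" "\<epsilon> \<le> 1" and P: "P \<ge> 0"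
    and H: "\<And>x v. 0 \<le> H x v"
    and energy: "\<And>x v. norm x + norm v \<le> P * sqrt (H x v)"
    and profile: "\<And>s. 0 \<le> s \<Longrightarrow> a * min s R \<le> f s"
  shows "\<exists>C1 C2 Cr Cz. C1 > 0 \<and> C2 > 0 \<and> Cr > 0 \<and> Cz > 0 \<and>
    (\<forall>x x' v v'.
       norm (x - x') + norm (v - v') \<le> C1 * (f (rdist \<alpha> x x' v v') * (1 + \<epsilon> * H x v + \<epsilon> * H x' v'))
     \<and> (norm (x - x'))\<^sup>2 + (norm (v - v'))\<^sup>2
         \<le> C2 * (f (rdist \<alpha> x x' v v') * (1 + \<epsilon> * H x v + \<epsilon> * H x' v'))
     \<and> rdist \<alpha> x x' v v' \<le> Cr * (f (rdist \<alpha> x x' v v') * (1 + \<epsilon> * H x v + \<epsilon> * H x' v'))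
     \<and> norm (x - x') \<le> Cz * f (rdist \<alpha> x x' v v') * (1 + \<epsilon> * sqrt (H x v) + \<epsilon> * sqrt (H x' v')))"
proof (rule exI[of _ "(1 + 2 / \<alpha>) / a + (2 * P / \<epsilon>) / (a * R)"],
    rule exI[of _ "(1 + 2 / \<alpha>)\<^sup>2 * R / a + (2 * P\<^sup>2 / \<epsilon>) / (a * R)"],
    rule exI[of _ "1 / a + (\<alpha> + 1) * (2 * P / \<epsilon>) / (a * R)"],
    rule exI[of _ "(1 / \<alpha>) / a + (P / \<epsilon>) / (a * R)"], intro conjI allI)
  fix x x' v v' :: 'a
  note bounds = distances_le_weighted_profile[OF \<alpha> a R \<epsilon> P H H energy energy
      profile[OF rdist_nonneg[OF less_imp_le[OF \<alpha>]]]]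
  show "norm (x - x') + norm (v - v') \<le> ((1 + 2 / \<alpha>) / a + (2 * P / \<epsilon>) / (a * R))
      * (f (rdist \<alpha> x x' v v') * (1 + \<epsilon> * H x v + \<epsilon> * H x' v'))"
    by (rule bounds(1))
  show "(norm (x - x'))\<^sup>2 + (norm (v - v'))\<^sup>2 \<le> ((1 + 2 / \<alpha>)\<^sup>2 * R / a + (2 * P\<^sup>2 / \<epsilon>) / (a * R))
      * (f (rdist \<alpha> x x' v v') * (1 + \<epsilon> * H x v + \<epsilon> * H x' v'))"
    by (rule bounds(2))
  show "rdist \<alpha> x x' v v' \<le> (1 / a + (\<alpha> + 1) * (2 * P / \<epsilon>) / (a * R))
      * (f (rdist \<alpha> x x' v v') * (1 + \<epsilon> * H x v + \<epsilon> * H x' v'))"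
    by (rule bounds(3))
  show "norm (x - x') \<le> ((1 / \<alpha>) / a + (P / \<epsilon>) / (a * R))
      * f (rdist \<alpha> x x' v v') * (1 + \<epsilon> * sqrt (H x v) + \<epsilon> * sqrt (H x' v'))"
    using bounds(4) by (simp only: mult.assoc)
qed (use \<alpha> a R \<epsilon> P in \<open>auto intro!: add_pos_nonneg divide_pos_pos mult_pos_pos simp: add_nonneg_eq_0_iff\<close>)

lemma Hf_ge_sum_squares:
  fixes x v :: "'a::real_inner"
  assumes lam: "lam > 0" and U: "U x \<ge> 0"
  shows "min lam 3 * ((norm x)\<^sup>2 + (norm (x + 2 *\<^sub>R v))\<^sup>2) \<le> Hf U lam x v"
proof -
  have "(norm (x + 2 *\<^sub>R v))\<^sup>2 = (norm x)\<^sup>2 + 4 * (x \<bullet> v) + 4 * (norm v)\<^sup>2"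
    unfolding power2_norm_eq_inner by (simp add: inner_add_left inner_add_right inner_commute)
  then have "Hf U lam x v
      = 24 * U x + (3 - 6 * gam lam) * (norm x)\<^sup>2 + lam * (norm x)\<^sup>2 + 3 * (norm (x + 2 *\<^sub>R v))\<^sup>2"
    unfolding Hf_def by (simp add: algebra_simps)
  moreover have "0 \<le> 3 - 6 * gam lam"
    using lam by (simp add: gam_def field_simps)
  then have "0 \<le> (3 - 6 * gam lam) * (norm x)\<^sup>2" by simp
  moreover have "min lam 3 * (norm x)\<^sup>2 \<le> lam * (norm x)\<^sup>2"
    and "min lam 3 * (norm (x + 2 *\<^sub>R v))\<^sup>2 \<le> 3 * (norm (x + 2 *\<^sub>R v))\<^sup>2"
    by (simp_all add: mult_right_mono)
  ultimately show ?thesis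
    using U unfolding distrib_left by linarith
qed

lemma Hf_nonneg:
  fixes x v :: "'a::real_inner"
  assumes "lam > 0" and "U x \<ge> 0"
  shows "0 \<le> Hf U lam x v"
proof -
  have "0 \<le> min lam 3 * ((norm x)\<^sup>2 + (norm (x + 2 *\<^sub>R v))\<^sup>2)" using assms by simp
  with Hf_ge_sum_squares[of lam U x v] assms show ?thesis by linarith
qed

lemma norm_add_le_sqrt_Hf:
  fixes x v :: "'a::real_inner"
  assumes lam: "lam > 0" and U: "U x \<ge> 0"
  shows "norm x + norm v \<le> sqrt (9 / (2 * min lam 3)) * sqrt (Hf U lam x v)"
proof -
  define w where "w = x + 2 *\<^sub>R v"
  define \<mu> where "\<mu> = min lam 3"
  have \<mu>: "\<mu> > 0" using lam by (simp add: \<mu>_def)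
  have "2 * norm v = norm (w - x)" by (simp add: w_def)
  also have "\<dots> \<le> norm w + norm x" by (rule norm_triangle_ineq4)
  finally have "norm x + norm v \<le> 3/2 * (norm x + norm w)"
    using norm_ge_zero[of w] norm_ge_zero[of x] by argo
  then have "(norm x + norm v)\<^sup>2 \<le> (3/2 * (norm x + norm w))\<^sup>2"
    by (intro power_mono) simp_all
  also have "\<dots> \<le> 9/2 * ((norm x)\<^sup>2 + (norm w)\<^sup>2)"
    using zero_le_power2[of "norm x - norm w"] by (simp add: power2_eq_square algebra_simps)
  also have "\<dots> \<le> 9 / (2 * \<mu>) * Hf U lam x v"
    using Hf_ge_sum_squares[of lam U x v] lam U \<mu>
    by (simp add: w_def \<mu>_def field_simps)
  finally show ?thesis
    by (simp add: \<mu>_def real_le_rsqrt real_sqrt_mult[symmetric])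
qed

lemma gam_bounds:
  assumes "lam > 0"
  shows "0 < gam lam" "gam lam < 1/2" "gam lam \<le> lam"
  using assms by (auto simp: gam_def field_simps)

lemma Bc_ge_24:
  assumes "lam > 0" "A \<ge> 0" "At \<ge> 0" "d > 0"
  shows "24 \<le> Bc lam A At d"
proof -
  have "0 \<le> (lam - gam lam) * At" using gam_bounds(3)[of lam] assms by simp
  with assms show ?thesis by (simp add: Bc_def)
qed

lemma R1_pos:
  assumes "lam > 0" "Bc lam A At d > 0"
  shows "0 < R1 lam A At LU d"
proof -
  have "0 < (1 + alph lam LU)\<^sup>2 + (alph lam LU)\<^sup>2"
    by (simp add: sum_power2_gt_zero_iff)
  with assms gam_bounds(1)[of lam]
  have "0 < 24 * ((1 + alph lam LU)\<^sup>2 + (alph lam LU)\<^sup>2) / (5 * gam lam * min 3 (lam / 3)) * Bc lam A At d"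
    by (intro mult_pos_pos divide_pos_pos) auto
  then show ?thesis by (simp add: R1_def)
qed

lemma cc_bounds:
  assumes lam: "lam > 0" and "A \<ge> 0" "At \<ge> 0" "d > 0"
    and LU: "LU > 0" and LW: "0 \<le> LW" "LW < lam / 4"
  shows "0 < cc lam A At LU LW d" "cc lam A At LU LW d \<le> gam lam / 36"
    and "cc lam A At LU LW d \<le> exp (- (1/8) * kappa0 lam LU LW * (R1 lam A At LU d)\<^sup>2) / 14"
proof -
  define m1 where "m1 = 1/2 - (LU + LW) / (2 * alph lam LU)"
  define m2 where "m2 = 2 * sqrt ((LU + LW) / (2 * pi * alph lam LU))"
  define E where "E = exp (- (1/8) * kappa0 lam LU LW * (R1 lam A At LU d)\<^sup>2)"
  have cc: "cc lam A At LU LW d = min (gam lam / 36) (min (Bc lam A At d / 3) (1/7 * min m1 m2 * E))"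
    by (simp add: cc_def m1_def m2_def E_def)
  have \<alpha>: "LU + LW < alph lam LU" "0 < alph lam LU"
    using lam LU LW by (simp_all add: alph_def)
  then have m1: "0 < m1" "m1 \<le> 1/2"
    using LU LW by (simp_all add: m1_def field_simps)
  have m2: "0 < m2" using \<alpha> LU LW by (simp add: m2_def)
  have "0 < E" by (simp add: E_def)
  then show "0 < cc lam A At LU LW d"
    using cc m1 m2 gam_bounds(1)[OF lam] Bc_ge_24[of lam A At d] assms by simp
  show "cc lam A At LU LW d \<le> gam lam / 36" using cc by linarith
  have "1/7 * min m1 m2 * E \<le> 1/7 * (1/2) * E"
    using m1 \<open>0 < E\<close> by (intro mult_right_mono) auto
  then show "cc lam A At LU LW d \<le> E / 14" using cc by linarith
qed

lemma epsc_bounds: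
  assumes "lam > 0" "A \<ge> 0" "At \<ge> 0" "d > 0" "LU > 0" "0 \<le> LW" "LW < lam / 4"
  shows "0 < epsc lam A At LU LW d" "epsc lam A At LU LW d \<le> 1/2"
proof -
  have B: "24 \<le> Bc lam A At d" using Bc_ge_24 assms by blast
  have c: "0 < cc lam A At LU LW d" "cc lam A At LU LW d \<le> 1/72"
    using cc_bounds(1,2)[OF assms] gam_bounds(2)[OF assms(1)] by linarith+
  with B show "0 < epsc lam A At LU LW d" by (simp add: epsc_def)
  from B c show "epsc lam A At LU LW d \<le> 1/2" by (simp add: epsc_def field_simps)
qed

lemma Cbig_eq_7_cc: "Bc lam A At d \<noteq> 0 \<Longrightarrow> Cbig lam A At LU LW d = 7 * cc lam A At LU LW d"
  by (simp add: Cbig_def epsc_def)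

definition phi_rate :: "real \<Rightarrow> real \<Rightarrow> real \<Rightarrow> real \<Rightarrow> real \<Rightarrow> nat \<Rightarrow> real" where
  "phi_rate lam A At LU LW d =
     (LU + LW) / alph lam LU + alph lam LU + 96 * epsc lam A At LU LW d * max (1 / (2 * alph lam LU)) 1"

lemma phif_eq: "phif lam A At LU LW d = (\<lambda>s. exp (- (1/8) * phi_rate lam A At LU LW d * s\<^sup>2))"
  by (simp add: fun_eq_iff phif_def phi_rate_def)

lemma phi_rate_add_48_le_kappa0:
  assumes "epsc lam A At LU LW d \<le> 1/2"
  shows "phi_rate lam A At LU LW d + 48 \<le> kappa0 lam LU LW"
proof -
  have "48 \<le> 96 * (1 - epsc lam A At LU LW d) * max (1 / (2 * alph lam LU)) 1"
    using assms by (intro order.trans[OF _ mult_left_mono[OF max.cobounded2]]) auto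
  then show ?thesis by (simp add: phi_rate_def kappa0_def algebra_simps)
qed

lemma scaled_exp_gap_le_half:
  fixes C K \<kappa> X :: real
  assumes X: "0 \<le> X" and C: "C \<le> exp (- (1/8) * \<kappa> * X) / 2" and gap: "K + 48 \<le> \<kappa>"
  shows "C / 4 * X * exp ((1/8) * K * X) \<le> 1/2"
proof -
  have "C / 4 * X * exp ((1/8) * K * X) \<le> exp (- (1/8) * \<kappa> * X) / 8 * X * exp ((1/8) * K * X)"
    using C X by (intro mult_right_mono) auto
  also have "\<dots> = X * exp (- (1/8) * (\<kappa> - K) * X) / 8"
    by (simp add: mult_exp_exp field_simps)
  also have "\<dots> \<le> X * exp (- 6 * X) / 8"
    using gap X by (intro divide_right_mono mult_left_mono) (auto simp: mult_right_mono)
  also have "\<dots> \<le> 1/2"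
  proof -
    have "X \<le> 4 * exp (6 * X)"
      using exp_ge_add_one_self[of "6 * X"] exp_gt_zero[of "6 * X"] by linarith
    then show ?thesis by (simp add: exp_minus field_simps)
  qed
  finally show ?thesis .
qed

lemma ff_ge_linear_min:
  assumes "lam > 0" "A \<ge> 0" "At \<ge> 0" "d > 0" "LU > 0" "0 \<le> LW" "LW < lam / 4"
  shows "\<exists>a>0. \<forall>s\<ge>0. a * min s (R1 lam A At LU d) \<le> ff lam A At LU LW d s"
proof -
  define K where "K = phi_rate lam A At LU LW d"
  define R where "R = R1 lam A At LU d"
  define C where "C = Cbig lam A At LU LW d"
  have B: "24 \<le> Bc lam A At d" using Bc_ge_24 assms by blast
  have R: "0 < R" unfolding R_def using R1_pos assms(1) B by simp
  have \<epsilon>: "0 < epsc lam A At LU LW d" "epsc lam A At LU LW d \<le> 1/2"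
    using epsc_bounds[OF assms] by auto
  have K: "0 \<le> K"
    using \<epsilon> assms by (simp add: K_def phi_rate_def alph_def)
  have C: "C = 7 * cc lam A At LU LW d" using Cbig_eq_7_cc B by (simp add: C_def)
  then have "0 \<le> C" using cc_bounds(1)[OF assms] by simp
  have "C \<le> exp (- (1/8) * kappa0 lam LU LW * R\<^sup>2) / 2"
    using C cc_bounds(3)[OF assms] by (simp add: R_def)
  then have small: "C / 4 * R\<^sup>2 * exp ((1/8) * K * R\<^sup>2) \<le> 1/2"
    by (rule scaled_exp_gap_le_half[rotated]) (use phi_rate_add_48_le_kappa0[OF \<epsilon>(2)] in \<open>simp_all add: K_def\<close>)
  show ?thesis
    unfolding R_def[symmetric]
  proof (intro exI[of _ "exp (- (1/8) * K * R\<^sup>2) / 2"] conjI allI impI)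
    fix s :: real assume "0 \<le> s"
    from gaussian_profile_ge_linear[OF K R \<open>0 \<le> C\<close> this small]
    show "exp (- (1/8) * K * R\<^sup>2) / 2 * min s R \<le> ff lam A At LU LW d s"
      by (simp add: ff_def gf_def Phif_def phif_eq K_def R_def C_def)
  qed simp
qed

theorem lemma2p6:
  fixes U W :: "'a::euclidean_space \<Rightarrow> real"
    and gradU gradW :: "'a \<Rightarrow> 'a"
    and lam A At LU LW :: real
  assumes U_grad: "\<And>x. (U has_derivative (\<lambda>h. gradU x \<bullet> h)) (at x)"
    and U_C1: "continuous_on UNIV gradU"
    and W_grad: "\<And>x. (W has_derivative (\<lambda>h. gradW x \<bullet> h)) (at x)"
    and W_C1: "continuous_on UNIV gradW"
    and A1_nonneg: "\<And>x. U x \<ge> 0"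
    and A1_lam: "lam > 0" and A1_A: "A \<ge> 0"
    and A1: "\<And>x. (1/2) * (gradU x \<bullet> x) \<ge> lam * (U x + (norm x)\<^sup>2 / 4) - A"
    and A2: "LU > 0" "lipschitz_on LU UNIV gradU"
    and A3_even: "\<And>x. W (- x) = W x"
    and A3_lip: "lipschitz_on LW UNIV gradW" and A3_LW: "LW < lam / 8"
    and At: "At \<ge> 0" "\<And>x. U x \<ge> lam / 6 * (norm x)\<^sup>2 - At"
  shows "\<exists>C1 C2 Cr Cz. C1 > 0 \<and> C2 > 0 \<and> Cr > 0 \<and> Cz > 0 \<and>
    (\<forall>x x' v v' :: 'a.
       norm (x - x') + norm (v - v') \<le> C1 * rho U lam A At LU LW (x, v) (x', v')
     \<and> (norm (x - x'))\<^sup>2 + (norm (v - v'))\<^sup>2 \<le> C2 * rho U lam A At LU LW (x, v) (x', v')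
     \<and> rdist (alph lam LU) x x' v v' \<le> Cr * rho U lam A At LU LW (x, v) (x', v')
     \<and> norm (x - x') \<le> Cz * ff lam A At LU LW DIM('a) (rdist (alph lam LU) x x' v v')
         * (1 + epsc lam A At LU LW DIM('a) * sqrt (Hf U lam x v)
              + epsc lam A At LU LW DIM('a) * sqrt (Hf U lam x' v')))"
proof -
  (* Only U >= 0 and the conditions on the constants enter. *)
  define d \<alpha> \<epsilon> where "d = DIM('a)" and "\<alpha> = alph lam LU" and "\<epsilon> = epsc lam A At LU LW d"
  have LW: "0 \<le> LW" "LW < lam / 4" using lipschitz_on_nonneg[OF A3_lip] A3_LW by auto
  have d: "0 < d" by (simp add: d_def)
  have \<alpha>: "0 < \<alpha>" using A1_lam A2(1) by (simp add: \<alpha>_def alph_def)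
  have \<epsilon>: "0 < \<epsilon>" "\<epsilon> \<le> 1" using epsc_bounds[OF A1_lam A1_A At(1) d A2(1) LW] by (simp_all add: \<epsilon>_def)
  have R: "0 < R1 lam A At LU d" using R1_pos[OF A1_lam] Bc_ge_24[OF A1_lam A1_A At(1) d] by simp
  have P: "0 \<le> sqrt (9 / (2 * min lam 3))" using A1_lam by simp
  obtain a where "0 < a" and "\<And>s. 0 \<le> s \<Longrightarrow> a * min s (R1 lam A At LU d) \<le> ff lam A At LU LW d s"
    using ff_ge_linear_min[OF A1_lam A1_A At(1) d A2(1) LW] by blast
  from distance_bounds_by_weighted_profile[where H = "Hf U lam" and f = "ff lam A At LU LW d",
      OF \<alpha> this(1) R \<epsilon> P Hf_nonneg[of lam U, OF A1_lam A1_nonneg]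
        norm_add_le_sqrt_Hf[of lam U, OF A1_lam A1_nonneg] this(2)]
  show ?thesis by (simp only: rho_def Let_def prod.sel d_def \<alpha>_def \<epsilon>_def)
qed

end
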